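(* Let $\Omega\subset\mathbb{R}^3$ be a bounded, connected Lipschitz domain and $\lambda\in\mathbb{R}$. Then $$H_0^1(\Omega)^3\cap\{\nabla\phi:\phi\in\ker(-\Delta_{\rm D}-\lambda)\}=\{0\}.$$
   Context: $-\Delta_{\rm D}$ denotes the Dirichlet Laplacian in $L^2(\Omega)$, i.e. the self-adjoint operator associated with the form $\int_\Omega\nabla\phi\cdot\nabla\psi$ on $H_0^1(\Omega)$. *)

theory Defs
  imports "HOL-Analysis.Analysis"
begin

text \<open>Points of R^3 are vectors of type real^3; functions on Omega are represented
  by functions on the whole space (only values on Omega matter).\<close>

definition partial_deriv :: "3 \<Rightarrow> (real^3 \<Rightarrow> real) \<Rightarrow> real^3 \<Rightarrow> real" where
  "partial_deriv i f = (\<lambda>x. frechet_derivative f (at x) (axis i 1))"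

fun Ck :: "nat \<Rightarrow> (real^3 \<Rightarrow> real) \<Rightarrow> bool" where
  "Ck 0 f = continuous_on UNIV f"
| "Ck (Suc k) f = (f differentiable_on UNIV \<and> (\<forall>i. Ck k (partial_deriv i f)))"

definition smooth_fun :: "(real^3 \<Rightarrow> real) \<Rightarrow> bool" where
  "smooth_fun f \<longleftrightarrow> (\<forall>k. Ck k f)"

definition test_fun :: "(real^3) set \<Rightarrow> (real^3 \<Rightarrow> real) set" where
  "test_fun \<Omega> = {f. smooth_fun f \<and> compact (closure {x. f x \<noteq> 0}) \<and> closure {x. f x \<noteq> 0} \<subseteq> \<Omega>}"

definition L2 :: "(real^3) set \<Rightarrow> (real^3 \<Rightarrow> real) \<Rightarrow> bool" where
  "L2 \<Omega> u \<longleftrightarrow> set_borel_measurable lebesgue \<Omega> u \<and> set_integrable lebesgue \<Omega> (\<lambda>x. (u x)\<^sup>2)"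

definition weak_partial :: "(real^3) set \<Rightarrow> 3 \<Rightarrow> (real^3 \<Rightarrow> real) \<Rightarrow> (real^3 \<Rightarrow> real) \<Rightarrow> bool" where
  "weak_partial \<Omega> i u g \<longleftrightarrow>
     (\<forall>\<psi>\<in>test_fun \<Omega>. (LINT x:\<Omega>|lebesgue. u x * partial_deriv i \<psi> x)
                      = - (LINT x:\<Omega>|lebesgue. g x * \<psi> x))"

definition H1 :: "(real^3) set \<Rightarrow> (real^3 \<Rightarrow> real) \<Rightarrow> (real^3 \<Rightarrow> real^3) \<Rightarrow> bool" where
  "H1 \<Omega> u Du \<longleftrightarrow> L2 \<Omega> u \<and> (\<forall>i. L2 \<Omega> (\<lambda>x. Du x $ i) \<and> weak_partial \<Omega> i u (\<lambda>x. Du x $ i))"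

definition H1_dist2 :: "(real^3) set \<Rightarrow> (real^3 \<Rightarrow> real) \<Rightarrow> (real^3 \<Rightarrow> real^3)
    \<Rightarrow> (real^3 \<Rightarrow> real) \<Rightarrow> (real^3 \<Rightarrow> real^3) \<Rightarrow> real" where
  "H1_dist2 \<Omega> u Du v Dv = (LINT x:\<Omega>|lebesgue. (u x - v x)\<^sup>2)
      + (\<Sum>i\<in>UNIV. LINT x:\<Omega>|lebesgue. (Du x $ i - Dv x $ i)\<^sup>2)"

definition H10 :: "(real^3) set \<Rightarrow> (real^3 \<Rightarrow> real) \<Rightarrow> (real^3 \<Rightarrow> real^3) \<Rightarrow> bool" where
  "H10 \<Omega> u Du \<longleftrightarrow> H1 \<Omega> u Du \<and>
     (\<exists>\<psi>::nat \<Rightarrow> real^3 \<Rightarrow> real. (\<forall>n. \<psi> n \<in> test_fun \<Omega>) \<and>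
        (\<lambda>n. H1_dist2 \<Omega> (\<psi> n) (\<lambda>x. \<chi> i. partial_deriv i (\<psi> n) x) u Du) \<longlonglongrightarrow> 0)"

text \<open>phi is in the kernel of (-Delta_D - lambda): phi belongs to the domain of the Dirichlet
  Laplacian (the operator associated with the form on H^1_0) and -Delta_D phi = lambda phi,
  i.e. phi in H^1_0 and the form identity holds against all of H^1_0.\<close>
definition dirichlet_eigen_kernel :: "(real^3) set \<Rightarrow> real \<Rightarrow> (real^3 \<Rightarrow> real) \<Rightarrow> (real^3 \<Rightarrow> real^3) \<Rightarrow> bool" where
  "dirichlet_eigen_kernel \<Omega> lam \<phi> D\<phi> \<longleftrightarrow> H10 \<Omega> \<phi> D\<phi> \<and>
     (\<forall>\<psi> D\<psi>. H10 \<Omega> \<psi> D\<psi> \<longrightarrow>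
        (LINT x:\<Omega>|lebesgue. D\<phi> x \<bullet> D\<psi> x) = lam * (LINT x:\<Omega>|lebesgue. \<phi> x * \<psi> x))"

definition lipschitz_domain :: "(real^3) set \<Rightarrow> bool" where
  "lipschitz_domain \<Omega> \<longleftrightarrow> open \<Omega> \<and>
     (\<forall>p\<in>frontier \<Omega>. \<exists>(Q :: real^3 \<Rightarrow> real^3) r h L (g :: real^2 \<Rightarrow> real).
        orthogonal_transformation Q \<and> 0 < r \<and> 0 < h \<and> L-lipschitz_on UNIV g \<and>
        (\<forall>z::real^2. norm z < r \<longrightarrow> \<bar>g z\<bar> < h) \<and>
        (\<forall>x. let y = Q (x - p); y' = (\<chi> i::2. if i = 1 then y $ 1 else y $ 2) in
              (norm y' < r \<and> \<bar>y $ 3\<bar> < h) \<longrightarrow> (x \<in> \<Omega> \<longleftrightarrow> y $ 3 < g y')))"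

end

theory Submission
  imports Defs
begin

text \<open>Since \<open>G = \<nabla>\<phi>\<close> has components in \<open>H\<^sup>1\<^sub>0\<close>, each field \<open>x\<^sub>j G\<^sub>j\<close> is an admissible
  test function in the weak eigenvalue equation. The weak Hessian \<open>\<partial>\<^sub>iG\<^sub>j\<close> of \<open>\<phi>\<close> is symmetric,
  so integration by parts turns that equation into the Rellich-type identity
  \<open>\<integral> G\<^sub>j\<^sup>2 - \<integral> |G|\<^sup>2 / 2 = - \<lambda> \<integral> \<phi>\<^sup>2 / 2\<close> for each \<open>j\<close>, while testing with \<open>\<phi>\<close> itself gives
  \<open>\<integral> |G|\<^sup>2 = \<lambda> \<integral> \<phi>\<^sup>2\<close>. Summing the identity over the three coordinates yields
  \<open>-\<integral> |G|\<^sup>2 / 2 = -3 \<integral> |G|\<^sup>2 / 2\<close>, so \<open>G = 0\<close>.\<close>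

section \<open>Partial derivatives of smooth functions\<close>

lemma partial_deriv_has_derivative:
  assumes "(f has_derivative f') (at x)"
  shows "partial_deriv i f x = f' (axis i 1)"
  using frechet_derivative_at[OF assms] by (simp add: partial_deriv_def)

lemma Ck_Suc_imp_differentiable: "Ck (Suc k) f \<Longrightarrow> f differentiable at x"
  by (auto simp: differentiable_on_def)

lemma Ck_imp_continuous_on: "Ck k f \<Longrightarrow> continuous_on UNIV f"
  by (cases k) (auto intro: differentiable_imp_continuous_on)

lemma Ck_Suc_imp_Ck: "Ck (Suc k) f \<Longrightarrow> Ck k f"
proof (induction k arbitrary: f)
  case 0
  then show ?case by (auto intro: differentiable_imp_continuous_on)
qed auto

lemma Ck_zero: "Ck k (\<lambda>x. 0)"
proof (induction k)
  case (Suc k)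
  have "partial_deriv i (\<lambda>x. 0) = (\<lambda>x. 0)" for i
    using partial_deriv_has_derivative[OF has_derivative_const[of 0]] by (auto simp: fun_eq_iff)
  with Suc show ?case by simp
qed simp

lemma partial_deriv_add:
  assumes "f differentiable at x" "g differentiable at x"
  shows "partial_deriv i (\<lambda>x. f x + g x) x = partial_deriv i f x + partial_deriv i g x"
proof -
  obtain f' g' where f: "(f has_derivative f') (at x)" and g: "(g has_derivative g') (at x)"
    using assms by (auto simp: differentiable_def)
  show ?thesis
    using partial_deriv_has_derivative[OF has_derivative_add[OF f g]]
      partial_deriv_has_derivative[OF f] partial_deriv_has_derivative[OF g] by simp
qed

lemma Ck_add: "Ck k f \<Longrightarrow> Ck k g \<Longrightarrow> Ck k (\<lambda>x. f x + g x)"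
proof (induction k arbitrary: f g)
  case 0
  then show ?case by (auto intro: continuous_on_add)
next
  case (Suc k)
  have "partial_deriv i (\<lambda>x. f x + g x) = (\<lambda>x. partial_deriv i f x + partial_deriv i g x)" for i
    using partial_deriv_add Suc.prems Ck_Suc_imp_differentiable by blast
  with Suc show ?case by (auto intro: differentiable_on_add)
qed

lemma partial_deriv_coord_mult:
  assumes "f differentiable at x"
  shows "partial_deriv i (\<lambda>x. x $ j * f x) x = (if i = j then f x else 0) + x $ j * partial_deriv i f x"
proof -
  obtain f' where f: "(f has_derivative f') (at x)"
    using assms by (auto simp: differentiable_def)
  have "((\<lambda>x::real^3. x $ j) has_derivative (\<lambda>h. h $ j)) (at x)"
    by (rule bounded_linear_imp_has_derivative[OF bounded_linear_vec_nth])
  from partial_deriv_has_derivative[OF has_derivative_mult[OF this f]] show ?thesis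
    using partial_deriv_has_derivative[OF f] by (auto simp: axis_def)
qed

lemma Ck_coord_mult: "Ck k f \<Longrightarrow> Ck k (\<lambda>x. x $ j * f x)"
proof (induction k arbitrary: f)
  case 0
  then show ?case by (auto intro!: continuous_intros)
next
  case (Suc k)
  have "(\<lambda>x. x $ j) differentiable at x" for x :: "real^3"
    by (simp add: bounded_linear_imp_differentiable bounded_linear_vec_nth)
  then have "(\<lambda>x. x $ j * f x) differentiable_on UNIV"
    using Suc.prems by (auto simp: differentiable_on_def intro!: differentiable_mult)
  moreover have "partial_deriv i (\<lambda>x. x $ j * f x)
      = (\<lambda>x. (if i = j then f x else 0) + x $ j * partial_deriv i f x)" for i
    using partial_deriv_coord_mult Suc.prems Ck_Suc_imp_differentiable by blast
  moreover have "Ck k (\<lambda>x. (if i = j then f x else 0) + x $ j * partial_deriv i f x)" for i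
    using Suc Ck_Suc_imp_Ck[OF Suc.prems] Ck_zero by (intro Ck_add) (cases "i = j", auto)
  ultimately show ?case by simp
qed

lemma smooth_fun_partial_deriv: "smooth_fun f \<Longrightarrow> smooth_fun (partial_deriv i f)"
  unfolding smooth_fun_def by (metis Ck.simps(2))

lemma smooth_fun_coord_mult: "smooth_fun f \<Longrightarrow> smooth_fun (\<lambda>x. x $ j * f x)"
  unfolding smooth_fun_def by (blast intro: Ck_coord_mult)

lemma partial_deriv_outside_support:
  assumes "x \<notin> closure {y. f y \<noteq> 0}"
  shows "partial_deriv i f x = 0"
proof -
  have "((\<lambda>y. 0) has_derivative (\<lambda>h. 0)) (at x)" by simp
  then have "(f has_derivative (\<lambda>h. 0)) (at x)"
  proof (rule has_derivative_transform_within_open[where s = "- closure {y. f y \<noteq> 0}"])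
    fix y assume "y \<in> - closure {y. f y \<noteq> 0}"
    then show "0 = f y" using closure_subset[of "{y. f y \<noteq> 0}"] by auto
  qed (use assms in auto)
  then show ?thesis using partial_deriv_has_derivative by simp
qed

lemma test_fun_support_mono:
  assumes \<psi>: "\<psi> \<in> test_fun \<Omega>" and f: "smooth_fun f"
    and supp: "{x. f x \<noteq> 0} \<subseteq> closure {x. \<psi> x \<noteq> 0}"
  shows "f \<in> test_fun \<Omega>"
proof -
  have sub: "closure {x. f x \<noteq> 0} \<subseteq> closure {x. \<psi> x \<noteq> 0}"
    using supp closure_minimal by blast
  moreover have "bounded (closure {x. \<psi> x \<noteq> 0})"
    using \<psi> by (simp add: test_fun_def compact_imp_bounded)
  ultimately have "compact (closure {x. f x \<noteq> 0})"
    by (simp add: compact_eq_bounded_closed bounded_subset)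
  with sub \<psi> f show ?thesis by (auto simp: test_fun_def)
qed

lemma test_fun_partial_deriv: "\<psi> \<in> test_fun \<Omega> \<Longrightarrow> partial_deriv i \<psi> \<in> test_fun \<Omega>"
  by (rule test_fun_support_mono)
    (auto simp: test_fun_def intro: smooth_fun_partial_deriv partial_deriv_outside_support)

lemma test_fun_coord_mult: "\<psi> \<in> test_fun \<Omega> \<Longrightarrow> (\<lambda>x. x $ j * \<psi> x) \<in> test_fun \<Omega>"
  by (rule test_fun_support_mono)
    (use closure_subset[of "{x. \<psi> x \<noteq> 0}"] in \<open>auto simp: test_fun_def intro: smooth_fun_coord_mult\<close>)

lemma test_fun_Ck: "\<psi> \<in> test_fun \<Omega> \<Longrightarrow> Ck k \<psi>"
  by (simp add: test_fun_def smooth_fun_def)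

lemma test_fun_partial_deriv_coord_mult:
  "\<psi> \<in> test_fun \<Omega> \<Longrightarrow>
    partial_deriv i (\<lambda>x. x $ j * \<psi> x) x = (if i = j then \<psi> x else 0) + x $ j * partial_deriv i \<psi> x"
  by (rule partial_deriv_coord_mult, rule Ck_Suc_imp_differentiable, rule test_fun_Ck)

lemma test_fun_bounded:
  assumes "\<psi> \<in> test_fun \<Omega>"
  obtains B where "\<And>x. \<bar>\<psi> x\<bar> \<le> B"
proof -
  let ?K = "closure {y. \<psi> y \<noteq> 0}"
  have "compact ?K"
    using assms by (simp add: test_fun_def)
  then have "compact (\<psi> ` ?K)"
    using Ck_imp_continuous_on[OF test_fun_Ck[OF assms]]
    by (metis compact_continuous_image continuous_on_subset subset_UNIV)
  then obtain B where B: "\<forall>y\<in>\<psi> ` ?K. norm y \<le> B"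
    using compact_imp_bounded bounded_iff by metis
  have "\<bar>\<psi> x\<bar> \<le> max B 0" for x
    using B closure_subset[of "{y. \<psi> y \<noteq> 0}"] by (cases "x \<in> ?K") force+
  then show ?thesis by (rule that)
qed

section \<open>Symmetry of second partial derivatives\<close>

definition second_difference :: "(real^3 \<Rightarrow> real) \<Rightarrow> real^3 \<Rightarrow> 3 \<Rightarrow> 3 \<Rightarrow> real \<Rightarrow> real" where
  "second_difference \<psi> x i j h =
     \<psi> (x + h *\<^sub>R axis i 1 + h *\<^sub>R axis j 1) - \<psi> (x + h *\<^sub>R axis i 1) - \<psi> (x + h *\<^sub>R axis j 1) + \<psi> x"

lemma second_difference_commute: "second_difference \<psi> x i j h = second_difference \<psi> x j i h"
  by (simp add: second_difference_def algebra_simps)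

lemma has_real_derivative_partial_deriv_line:
  assumes "f differentiable at (y + s *\<^sub>R axis i 1)"
  shows "((\<lambda>s. f (y + s *\<^sub>R axis i 1)) has_real_derivative partial_deriv i f (y + s *\<^sub>R axis i 1)) (at s)"
proof -
  obtain f' where f: "(f has_derivative f') (at (y + s *\<^sub>R axis i 1))"
    using assms by (auto simp: differentiable_def)
  have "((\<lambda>s. y + s *\<^sub>R axis i (1::real)) has_derivative (\<lambda>h. h *\<^sub>R axis i 1)) (at s)"
    by (auto intro!: derivative_eq_intros)
  from has_derivative_compose[OF this f]
  have "((\<lambda>s. f (y + s *\<^sub>R axis i 1)) has_derivative (\<lambda>h. f' (axis i 1) * h)) (at s)"
    using linear_scale[OF has_derivative_linear[OF f]] by (simp add: o_def mult.commute)
  then show ?thesis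
    using partial_deriv_has_derivative[OF f] by (simp add: has_field_derivative_def)
qed

text \<open>Two applications of the mean value theorem, first along \<open>e\<^sub>i\<close>, then along \<open>e\<^sub>j\<close>.\<close>
lemma second_difference_mean_value:
  assumes C: "Ck 2 \<psi>" and h: "0 < h"
  obtains \<xi> \<eta> where "0 < \<xi>" "\<xi> < h" "0 < \<eta>" "\<eta> < h"
    "second_difference \<psi> x i j h
       = h * h * partial_deriv j (partial_deriv i \<psi>) (x + \<xi> *\<^sub>R axis i 1 + \<eta> *\<^sub>R axis j 1)"
proof -
  let ?ei = "axis i (1::real)" and ?ej = "axis j (1::real)"
  have d0: "\<psi> differentiable at z" and d1: "partial_deriv i \<psi> differentiable at z" for z
    using C by (simp_all add: numeral_2_eq_2 differentiable_on_def)
  define a where "a s = \<psi> ((x + h *\<^sub>R ?ej) + s *\<^sub>R ?ei) - \<psi> (x + s *\<^sub>R ?ei)" for s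
  have "(a has_real_derivative
      partial_deriv i \<psi> ((x + h *\<^sub>R ?ej) + s *\<^sub>R ?ei) - partial_deriv i \<psi> (x + s *\<^sub>R ?ei)) (at s)" for s
    unfolding a_def by (intro DERIV_diff has_real_derivative_partial_deriv_line d0)
  from MVT2[OF h this] obtain \<xi> where \<xi>: "0 < \<xi>" "\<xi> < h" and a: "a h - a 0
      = h * (partial_deriv i \<psi> ((x + h *\<^sub>R ?ej) + \<xi> *\<^sub>R ?ei) - partial_deriv i \<psi> (x + \<xi> *\<^sub>R ?ei))"
    by auto
  define b where "b t = partial_deriv i \<psi> ((x + \<xi> *\<^sub>R ?ei) + t *\<^sub>R ?ej)" for t
  have "(b has_real_derivative partial_deriv j (partial_deriv i \<psi>) ((x + \<xi> *\<^sub>R ?ei) + t *\<^sub>R ?ej)) (at t)" for t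
    unfolding b_def by (intro has_real_derivative_partial_deriv_line d1)
  from MVT2[OF h this] obtain \<eta> where \<eta>: "0 < \<eta>" "\<eta> < h"
    and b: "b h - b 0 = h * partial_deriv j (partial_deriv i \<psi>) ((x + \<xi> *\<^sub>R ?ei) + \<eta> *\<^sub>R ?ej)"
    by auto
  have "second_difference \<psi> x i j h = a h - a 0"
    by (simp add: a_def second_difference_def algebra_simps)
  also have "\<dots> = h * (b h - b 0)"
    by (simp add: a b_def algebra_simps)
  finally show ?thesis
    using that \<xi> \<eta> b by (simp add: mult.assoc)
qed

lemma mixed_partials_agree_nearby:
  assumes C: "Ck 2 \<psi>" and h: "0 < h"
  obtains p q where "norm (p - x) \<le> 2 * h" "norm (q - x) \<le> 2 * h"
    "partial_deriv j (partial_deriv i \<psi>) p = partial_deriv i (partial_deriv j \<psi>) q"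
proof -
  have near: "norm ((x + (\<xi> *\<^sub>R axis k 1 + \<eta> *\<^sub>R axis l 1)) - x) \<le> 2 * h"
    if "0 < \<xi>" "\<xi> < h" "0 < \<eta>" "\<eta> < h" for \<xi> \<eta> and k l :: 3
    using that norm_triangle_ineq[of "\<xi> *\<^sub>R axis k (1::real)" "\<eta> *\<^sub>R axis l 1"] by simp
  obtain \<xi> \<eta> where ij: "0 < \<xi>" "\<xi> < h" "0 < \<eta>" "\<eta> < h" "second_difference \<psi> x i j h
      = h * h * partial_deriv j (partial_deriv i \<psi>) (x + \<xi> *\<^sub>R axis i 1 + \<eta> *\<^sub>R axis j 1)"
    using second_difference_mean_value[OF C h] .
  obtain \<xi>' \<eta>' where ji: "0 < \<xi>'" "\<xi>' < h" "0 < \<eta>'" "\<eta>' < h" "second_difference \<psi> x j i h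
      = h * h * partial_deriv i (partial_deriv j \<psi>) (x + \<xi>' *\<^sub>R axis j 1 + \<eta>' *\<^sub>R axis i 1)"
    using second_difference_mean_value[OF C h] .
  have "partial_deriv j (partial_deriv i \<psi>) (x + (\<xi> *\<^sub>R axis i 1 + \<eta> *\<^sub>R axis j 1))
      = partial_deriv i (partial_deriv j \<psi>) (x + (\<xi>' *\<^sub>R axis j 1 + \<eta>' *\<^sub>R axis i 1))"
    using ij(5) ji(5) second_difference_commute[of \<psi> x i j] h by (simp add: add.assoc)
  with near[OF ij(1-4)] near[OF ji(1-4)] show ?thesis
    by (rule that)
qed

lemma partial_deriv_commute:
  assumes C: "Ck 2 \<psi>"
  shows "partial_deriv j (partial_deriv i \<psi>) x = partial_deriv i (partial_deriv j \<psi>) x"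
proof -
  define h where "h n = 1 / (real n + 1)" for n
  have "\<exists>p q. norm (p - x) \<le> 2 * h n \<and> norm (q - x) \<le> 2 * h n \<and>
      partial_deriv j (partial_deriv i \<psi>) p = partial_deriv i (partial_deriv j \<psi>) q" for n
  proof -
    have "0 < h n"
      by (simp add: h_def)
    from mixed_partials_agree_nearby[OF C this] show ?thesis
      by blast
  qed
  then have "\<forall>n. \<exists>p q. norm (p - x) \<le> 2 * h n \<and> norm (q - x) \<le> 2 * h n \<and>
      partial_deriv j (partial_deriv i \<psi>) p = partial_deriv i (partial_deriv j \<psi>) q"
    by blast
  then obtain p where "\<forall>n. \<exists>q. norm (p n - x) \<le> 2 * h n \<and> norm (q - x) \<le> 2 * h n \<and>
      partial_deriv j (partial_deriv i \<psi>) (p n) = partial_deriv i (partial_deriv j \<psi>) q"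
    by (rule choice[THEN exE])
  then obtain q where "\<forall>n. norm (p n - x) \<le> 2 * h n \<and> norm (q n - x) \<le> 2 * h n \<and>
      partial_deriv j (partial_deriv i \<psi>) (p n) = partial_deriv i (partial_deriv j \<psi>) (q n)"
    by (rule choice[THEN exE])
  then have near_x: "\<And>n. norm (p n - x) \<le> 2 * h n" "\<And>n. norm (q n - x) \<le> 2 * h n"
    and eq: "\<And>n. partial_deriv j (partial_deriv i \<psi>) (p n) = partial_deriv i (partial_deriv j \<psi>) (q n)"
    by auto
  have "h \<longlonglongrightarrow> 0"
    unfolding h_def using LIMSEQ_inverse_real_of_nat by (simp add: inverse_eq_divide add.commute)
  then have h2: "(\<lambda>n. 2 * h n) \<longlonglongrightarrow> 0"
    by (rule tendsto_mult_right_zero)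
  have "(\<lambda>n. p n - x) \<longlonglongrightarrow> 0" "(\<lambda>n. q n - x) \<longlonglongrightarrow> 0"
    by (rule Lim_null_comparison[OF always_eventually h2], simp add: near_x)+
  then have p: "p \<longlonglongrightarrow> x" and q: "q \<longlonglongrightarrow> x"
    by (simp_all add: LIM_zero_iff)
  have "continuous_on UNIV (partial_deriv j (partial_deriv i \<psi>))"
    and "continuous_on UNIV (partial_deriv i (partial_deriv j \<psi>))"
    using C by (auto simp: numeral_2_eq_2)
  from continuous_on_tendsto_compose[OF this(1) p] continuous_on_tendsto_compose[OF this(2) q]
  have "(\<lambda>n. partial_deriv j (partial_deriv i \<psi>) (p n)) \<longlonglongrightarrow> partial_deriv j (partial_deriv i \<psi>) x"
    and "(\<lambda>n. partial_deriv j (partial_deriv i \<psi>) (p n)) \<longlonglongrightarrow> partial_deriv i (partial_deriv j \<psi>) x"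
    unfolding eq by simp_all
  then show ?thesis
    by (rule LIMSEQ_unique)
qed

lemma test_fun_partial_deriv_commute:
  "\<psi> \<in> test_fun \<Omega> \<Longrightarrow> partial_deriv j (partial_deriv i \<psi>) = partial_deriv i (partial_deriv j \<psi>)"
  by (rule ext, rule partial_deriv_commute, rule test_fun_Ck)

section \<open>Square-integrable functions\<close>

definition square_integrable :: "'a measure \<Rightarrow> ('a \<Rightarrow> real) \<Rightarrow> bool" where
  "square_integrable M f \<longleftrightarrow> f \<in> borel_measurable M \<and> integrable M (\<lambda>x. (f x)\<^sup>2)"

lemma square_integrable_imp_integrable_mult:
  assumes "square_integrable M f" "square_integrable M g"
  shows "integrable M (\<lambda>x. f x * g x)"
proof (rule Bochner_Integration.integrable_bound)
  show "integrable M (\<lambda>x. (f x)\<^sup>2 + (g x)\<^sup>2)" "(\<lambda>x. f x * g x) \<in> borel_measurable M"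
    using assms by (auto simp: square_integrable_def)
  have "\<bar>f x * g x\<bar> \<le> (f x)\<^sup>2 + (g x)\<^sup>2" for x
  proof -
    have "2 * (\<bar>f x\<bar> * \<bar>g x\<bar>) \<le> (f x)\<^sup>2 + (g x)\<^sup>2"
      using sum_squares_bound[of "\<bar>f x\<bar>" "\<bar>g x\<bar>"] by (simp add: mult.assoc)
    then show ?thesis
      using abs_mult[of "f x" "g x"] abs_ge_zero[of "f x * g x"] by linarith
  qed
  then show "AE x in M. norm (f x * g x) \<le> norm ((f x)\<^sup>2 + (g x)\<^sup>2)"
    by simp
qed

lemma square_integrable_add:
  assumes "square_integrable M f" "square_integrable M g"
  shows "square_integrable M (\<lambda>x. f x + g x)"
proof -
  have "(\<lambda>x. (f x + g x)\<^sup>2) = (\<lambda>x. (f x)\<^sup>2 + (g x)\<^sup>2 + 2 * (f x * g x))"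
    by (auto simp: power2_eq_square algebra_simps)
  then show ?thesis
    using assms square_integrable_imp_integrable_mult[OF assms] by (auto simp: square_integrable_def)
qed

lemma square_integrable_cmult:
  assumes "square_integrable M f"
  shows "square_integrable M (\<lambda>x. c * f x)"
  using assms by (simp add: square_integrable_def power_mult_distrib borel_measurable_times)

lemma square_integrable_diff:
  assumes "square_integrable M f" "square_integrable M g"
  shows "square_integrable M (\<lambda>x. f x - g x)"
  using square_integrable_add[OF assms(1) square_integrable_cmult[OF assms(2), of "-1"]] by simp

lemma square_integrable_bounded_mult:
  assumes f: "square_integrable M f" and b: "b \<in> borel_measurable M"
    and bound: "\<And>x. x \<in> space M \<Longrightarrow> \<bar>b x\<bar> \<le> C"
  shows "square_integrable M (\<lambda>x. b x * f x)"
  unfolding square_integrable_def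
proof
  show "(\<lambda>x. b x * f x) \<in> borel_measurable M"
    using f b by (simp add: square_integrable_def borel_measurable_times)
  show "integrable M (\<lambda>x. (b x * f x)\<^sup>2)"
  proof (rule Bochner_Integration.integrable_bound)
    show "integrable M (\<lambda>x. C\<^sup>2 * (f x)\<^sup>2)" "(\<lambda>x. (b x * f x)\<^sup>2) \<in> borel_measurable M"
      using f b by (auto simp: square_integrable_def)
    have "(b x * f x)\<^sup>2 \<le> C\<^sup>2 * (f x)\<^sup>2" if "x \<in> space M" for x
      using power_mono[OF bound[OF that] abs_ge_zero, of 2]
      by (simp add: power_mult_distrib mult_right_mono)
    then show "AE x in M. norm ((b x * f x)\<^sup>2) \<le> norm (C\<^sup>2 * (f x)\<^sup>2)"
      by (auto intro!: AE_I2)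
  qed
qed

lemma square_integrable_bounded:
  assumes "finite_measure M" "f \<in> borel_measurable M" "\<And>x. \<bar>f x\<bar> \<le> C"
  shows "square_integrable M f"
proof -
  have "\<bar>(f x)\<^sup>2\<bar> \<le> C\<^sup>2" for x
    using power_mono[OF assms(3)[of x] abs_ge_zero, of 2] by simp
  then show ?thesis
    using assms by (auto simp: square_integrable_def intro!: finite_measure.integrable_const_bound[where B="C\<^sup>2"])
qed

lemma Cauchy_Schwarz_integral:
  assumes "square_integrable M f" "square_integrable M g"
  shows "(\<integral>x. f x * g x \<partial>M)\<^sup>2 \<le> (\<integral>x. (f x)\<^sup>2 \<partial>M) * (\<integral>x. (g x)\<^sup>2 \<partial>M)"
proof -
  let ?A = "\<integral>x. (f x)\<^sup>2 \<partial>M" and ?B = "\<integral>x. (g x)\<^sup>2 \<partial>M" and ?C = "\<integral>x. f x * g x \<partial>M"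
  have quadratic: "0 \<le> ?A + 2 * t * ?C + t\<^sup>2 * ?B" for t
  proof -
    have "(\<lambda>x. (f x + t * g x)\<^sup>2) = (\<lambda>x. (f x)\<^sup>2 + (2 * t) * (f x * g x) + t\<^sup>2 * (g x)\<^sup>2)"
      by (auto simp: power2_eq_square algebra_simps)
    then have "(\<integral>x. (f x + t * g x)\<^sup>2 \<partial>M) = ?A + 2 * t * ?C + t\<^sup>2 * ?B"
      using assms square_integrable_imp_integrable_mult[OF assms] by (simp add: square_integrable_def)
    moreover have "0 \<le> (\<integral>x. (f x + t * g x)\<^sup>2 \<partial>M)"
      by simp
    ultimately show ?thesis
      by simp
  qed
  show ?thesis
  proof (cases "?B = 0")
    case True
    have "?C = 0"
    proof (rule ccontr)
      assume "?C \<noteq> 0"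
      then have "0 \<le> ?A + 2 * (- (?A + 1) / (2 * ?C)) * ?C"
        using quadratic[of "- (?A + 1) / (2 * ?C)"] True by simp
      then show False
        using \<open>?C \<noteq> 0\<close> by (simp add: field_simps)
    qed
    then show ?thesis
      using True by simp
  next
    case False
    moreover have "0 \<le> ?B"
      by simp
    ultimately have B: "0 < ?B"
      by linarith
    have "0 \<le> ?A + 2 * (- ?C / ?B) * ?C + (- ?C / ?B)\<^sup>2 * ?B"
      by (rule quadratic)
    also have "\<dots> = ?A - ?C\<^sup>2 / ?B"
      using B by (simp add: power2_eq_square field_simps)
    finally show ?thesis
      using B by (simp add: field_simps)
  qed
qed

lemma L2_tendsto_integral_mult:
  assumes u: "square_integrable M u" and g: "square_integrable M g"
    and f: "\<And>n. square_integrable M (f n)"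
    and lim: "(\<lambda>n. \<integral>x. (f n x - u x)\<^sup>2 \<partial>M) \<longlonglongrightarrow> 0"
  shows "(\<lambda>n. \<integral>x. f n x * g x \<partial>M) \<longlonglongrightarrow> (\<integral>x. u x * g x \<partial>M)"
proof -
  define I where "I n = (\<integral>x. (f n x - u x) * g x \<partial>M)" for n
  have I: "(\<integral>x. f n x * g x \<partial>M) - (\<integral>x. u x * g x \<partial>M) = I n" for n
    unfolding I_def
    using square_integrable_imp_integrable_mult[OF f g] square_integrable_imp_integrable_mult[OF u g]
    by (simp add: left_diff_distrib)
  have bound: "(I n)\<^sup>2 \<le> (\<integral>x. (f n x - u x)\<^sup>2 \<partial>M) * (\<integral>x. (g x)\<^sup>2 \<partial>M)" for n
    unfolding I_def using Cauchy_Schwarz_integral[OF square_integrable_diff[OF f u] g] .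
  have "(\<lambda>n. (I n)\<^sup>2) \<longlonglongrightarrow> 0"
    by (rule Lim_null_comparison[OF always_eventually tendsto_mult_left_zero[OF lim, of "\<integral>x. (g x)\<^sup>2 \<partial>M"]])
      (simp add: bound)
  then have "I \<longlonglongrightarrow> 0"
    using tendsto_real_sqrt[of "\<lambda>n. (I n)\<^sup>2" 0] by (simp add: tendsto_rabs_zero_iff)
  then have "(\<lambda>n. (\<integral>x. f n x * g x \<partial>M) - (\<integral>x. u x * g x \<partial>M)) \<longlonglongrightarrow> 0"
    by (simp only: I)
  then show ?thesis
    by (simp add: LIM_zero_iff)
qed

lemma integral_tendsto_zero_bound:
  assumes "\<And>n. integrable M (F n)" "\<And>n. integrable M (G n)"
    "\<And>n x. x \<in> space M \<Longrightarrow> 0 \<le> F n x" "\<And>n x. x \<in> space M \<Longrightarrow> F n x \<le> G n x"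
    "(\<lambda>n. \<integral>x. G n x \<partial>M) \<longlonglongrightarrow> 0"
  shows "(\<lambda>n. \<integral>x. F n x \<partial>M) \<longlonglongrightarrow> (0::real)"
proof (rule Lim_null_comparison[OF always_eventually assms(5)], rule allI)
  fix n
  have "0 \<le> (\<integral>x. F n x \<partial>M)"
    using assms(3) by (intro integral_nonneg_AE AE_I2)
  moreover have "(\<integral>x. F n x \<partial>M) \<le> (\<integral>x. G n x \<partial>M)"
    using assms by (intro integral_mono)
  ultimately show "norm (\<integral>x. F n x \<partial>M) \<le> (\<integral>x. G n x \<partial>M)"
    by simp
qed

section \<open>Sobolev functions on a bounded open set\<close>

definition coord_mult_grad :: "3 \<Rightarrow> (real^3 \<Rightarrow> real) \<Rightarrow> (real^3 \<Rightarrow> real^3) \<Rightarrow> real^3 \<Rightarrow> real^3" where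
  "coord_mult_grad j u Du = (\<lambda>x. \<chi> i. (if i = j then 1 else 0) * u x + x $ j * Du x $ i)"

locale bounded_open_domain =
  fixes \<Omega> :: "(real^3) set"
  assumes open_domain: "open \<Omega>" and bounded_domain: "bounded \<Omega>"
begin

abbreviation "M \<equiv> lebesgue_on \<Omega>"

lemma sets_lebesgue_domain: "\<Omega> \<in> sets lebesgue"
  using lmeasurable_open[OF bounded_domain open_domain] by auto

lemma finite_measure_domain: "finite_measure M"
  using finite_measure_lebesgue_on[OF lmeasurable_open[OF bounded_domain open_domain]] .

lemma set_lebesgue_integral_domain:
  fixes f :: "real^3 \<Rightarrow> real"
  shows "(LINT x:\<Omega>|lebesgue. f x) = (\<integral>x. f x \<partial>M)"
  unfolding set_lebesgue_integral_def
  using integral_restrict_space[of \<Omega> lebesgue f] sets_lebesgue_domain by simp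

lemma AE_domain_iff: "(AE x in M. P x) \<longleftrightarrow> (AE x in lebesgue. x \<in> \<Omega> \<longrightarrow> P x)"
  using AE_restrict_space_iff[of \<Omega> lebesgue P] sets_lebesgue_domain by simp

lemma L2_iff_square_integrable: "L2 \<Omega> u \<longleftrightarrow> square_integrable M u"
  using set_integrable_eq[of \<Omega> lebesgue "\<lambda>x. (u x)\<^sup>2"]
    borel_measurable_restrict_space_iff[of \<Omega> lebesgue u] sets_lebesgue_domain
  by (simp add: L2_def square_integrable_def set_borel_measurable_def)

lemma continuous_imp_measurable_domain: "continuous_on UNIV f \<Longrightarrow> f \<in> borel_measurable M"
  using continuous_imp_measurable_on_sets_lebesgue[OF continuous_on_subset[OF _ subset_UNIV]
      sets_lebesgue_domain] .

lemma test_fun_square_integrable: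
  assumes "\<psi> \<in> test_fun \<Omega>"
  shows "square_integrable M \<psi>"
proof -
  obtain B where "\<And>x. \<bar>\<psi> x\<bar> \<le> B"
    using test_fun_bounded[OF assms] by blast
  then show ?thesis
    using Ck_imp_continuous_on[OF test_fun_Ck[OF assms]]
    by (blast intro: square_integrable_bounded finite_measure_domain continuous_imp_measurable_domain)
qed

lemma square_integrable_coord_mult:
  assumes "square_integrable M u"
  shows "square_integrable M (\<lambda>x. x $ j * u x)"
proof -
  obtain C where "\<forall>x\<in>\<Omega>. norm x \<le> C"
    using bounded_domain bounded_iff by blast
  then have "\<bar>x $ j\<bar> \<le> C" if "x \<in> \<Omega>" for x
    using component_le_norm_cart[of x j] that by fastforce
  moreover have "(\<lambda>x. x $ j) \<in> borel_measurable M"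
    by (intro continuous_imp_measurable_domain continuous_intros)
  ultimately show ?thesis
    using assms by (intro square_integrable_bounded_mult) auto
qed

lemma H1D:
  assumes "H1 \<Omega> u Du"
  shows "square_integrable M u" "square_integrable M (\<lambda>x. Du x $ i)"
    and "\<psi> \<in> test_fun \<Omega> \<Longrightarrow> (\<integral>x. u x * partial_deriv i \<psi> x \<partial>M) = - (\<integral>x. Du x $ i * \<psi> x \<partial>M)"
  using assms by (auto simp: H1_def L2_iff_square_integrable weak_partial_def set_lebesgue_integral_domain)

lemma H1I:
  assumes "square_integrable M u" "\<And>i. square_integrable M (\<lambda>x. Du x $ i)"
    and "\<And>i \<psi>. \<psi> \<in> test_fun \<Omega> \<Longrightarrow>
      (\<integral>x. u x * partial_deriv i \<psi> x \<partial>M) = - (\<integral>x. Du x $ i * \<psi> x \<partial>M)"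
  shows "H1 \<Omega> u Du"
  using assms by (auto simp: H1_def L2_iff_square_integrable weak_partial_def set_lebesgue_integral_domain)

lemma H10_imp_H1: "H10 \<Omega> u Du \<Longrightarrow> H1 \<Omega> u Du"
  by (simp add: H10_def)

lemma H1_dist2_domain:
  "H1_dist2 \<Omega> \<psi> (\<lambda>x. \<chi> i. partial_deriv i \<psi> x) u Du =
     (\<integral>x. (\<psi> x - u x)\<^sup>2 \<partial>M) + (\<Sum>i\<in>UNIV. \<integral>x. (partial_deriv i \<psi> x - Du x $ i)\<^sup>2 \<partial>M)"
  by (simp add: H1_dist2_def set_lebesgue_integral_domain)

lemma H10E:
  assumes "H10 \<Omega> u Du"
  obtains \<psi> where "\<And>n. \<psi> n \<in> test_fun \<Omega>" "(\<lambda>n. \<integral>x. (\<psi> n x - u x)\<^sup>2 \<partial>M) \<longlonglongrightarrow> 0"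
    "\<And>i. (\<lambda>n. \<integral>x. (partial_deriv i (\<psi> n) x - Du x $ i)\<^sup>2 \<partial>M) \<longlonglongrightarrow> 0"
proof -
  obtain \<psi> where \<psi>: "\<And>n. \<psi> n \<in> test_fun \<Omega>"
    and lim: "(\<lambda>n. H1_dist2 \<Omega> (\<psi> n) (\<lambda>x. \<chi> i. partial_deriv i (\<psi> n) x) u Du) \<longlonglongrightarrow> 0"
    using assms by (auto simp: H10_def)
  define a where "a n = (\<integral>x. (\<psi> n x - u x)\<^sup>2 \<partial>M)" for n
  define b where "b i n = (\<integral>x. (partial_deriv i (\<psi> n) x - Du x $ i)\<^sup>2 \<partial>M)" for i n
  have a_nonneg: "0 \<le> a n" and b_nonneg: "0 \<le> b i n" for i n
    by (simp_all add: a_def b_def)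
  have dist: "H1_dist2 \<Omega> (\<psi> n) (\<lambda>x. \<chi> i. partial_deriv i (\<psi> n) x) u Du = a n + (\<Sum>i\<in>UNIV. b i n)" for n
    by (simp add: H1_dist2_domain a_def b_def)
  have lim': "(\<lambda>n. a n + (\<Sum>i\<in>UNIV. b i n)) \<longlonglongrightarrow> 0"
    using lim unfolding dist .
  have a_le: "norm (a n) \<le> a n + (\<Sum>i\<in>UNIV. b i n)" for n
    using a_nonneg[of n] b_nonneg by (simp add: sum_nonneg)
  have b_le: "norm (b i n) \<le> a n + (\<Sum>i\<in>UNIV. b i n)" for i n
    using a_nonneg[of n] b_nonneg member_le_sum[of i UNIV "\<lambda>i. b i n"] by simp
  have "a \<longlonglongrightarrow> 0" "b i \<longlonglongrightarrow> 0" for i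
    by (rule Lim_null_comparison[OF always_eventually lim'], use a_le b_le in blast)+
  with \<psi> show ?thesis
    using that unfolding a_def b_def by blast
qed

lemma H10I:
  assumes "H1 \<Omega> u Du" "\<And>n. \<psi> n \<in> test_fun \<Omega>" "(\<lambda>n. \<integral>x. (\<psi> n x - u x)\<^sup>2 \<partial>M) \<longlonglongrightarrow> 0"
    "\<And>i. (\<lambda>n. \<integral>x. (partial_deriv i (\<psi> n) x - Du x $ i)\<^sup>2 \<partial>M) \<longlonglongrightarrow> 0"
  shows "H10 \<Omega> u Du"
proof -
  have "(\<lambda>n. (\<integral>x. (\<psi> n x - u x)\<^sup>2 \<partial>M) + (\<Sum>i\<in>UNIV. \<integral>x. (partial_deriv i (\<psi> n) x - Du x $ i)\<^sup>2 \<partial>M))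
     \<longlonglongrightarrow> 0 + (\<Sum>i\<in>(UNIV::3 set). 0)"
    by (intro tendsto_add tendsto_sum assms(3,4))
  then show ?thesis
    using assms(1,2) unfolding H10_def H1_dist2_domain by (intro conjI exI[of _ \<psi>]) auto
qed

lemma H10_integration_by_parts:
  assumes u: "H10 \<Omega> u Du" and v: "H1 \<Omega> v Dv"
  shows "(\<integral>x. u x * Dv x $ i \<partial>M) = - (\<integral>x. Du x $ i * v x \<partial>M)"
proof -
  obtain \<psi> where \<psi>: "\<And>n. \<psi> n \<in> test_fun \<Omega>" and lim0: "(\<lambda>n. \<integral>x. (\<psi> n x - u x)\<^sup>2 \<partial>M) \<longlonglongrightarrow> 0"
    and lim1: "\<And>i. (\<lambda>n. \<integral>x. (partial_deriv i (\<psi> n) x - Du x $ i)\<^sup>2 \<partial>M) \<longlonglongrightarrow> 0"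
    using H10E[OF u] by blast
  note u' = H1D[OF H10_imp_H1[OF u]] and v' = H1D[OF v]
  have "(\<lambda>n. \<integral>x. \<psi> n x * Dv x $ i \<partial>M) \<longlonglongrightarrow> (\<integral>x. u x * Dv x $ i \<partial>M)"
    by (rule L2_tendsto_integral_mult[OF u'(1) v'(2) test_fun_square_integrable[OF \<psi>] lim0])
  then have "(\<lambda>n. - (\<integral>x. \<psi> n x * Dv x $ i \<partial>M)) \<longlonglongrightarrow> - (\<integral>x. u x * Dv x $ i \<partial>M)"
    by (rule tendsto_minus)
  moreover have "- (\<integral>x. \<psi> n x * Dv x $ i \<partial>M) = (\<integral>x. partial_deriv i (\<psi> n) x * v x \<partial>M)" for n
    using v'(3)[OF \<psi>, of i n] by (simp add: mult.commute)
  ultimately have l1: "(\<lambda>n. \<integral>x. partial_deriv i (\<psi> n) x * v x \<partial>M) \<longlonglongrightarrow> - (\<integral>x. u x * Dv x $ i \<partial>M)"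
    by simp
  have l2: "(\<lambda>n. \<integral>x. partial_deriv i (\<psi> n) x * v x \<partial>M) \<longlonglongrightarrow> (\<integral>x. Du x $ i * v x \<partial>M)"
    by (rule L2_tendsto_integral_mult[OF u'(2) v'(1)
          test_fun_square_integrable[OF test_fun_partial_deriv[OF \<psi>]] lim1])
  from LIMSEQ_unique[OF l2 l1] show ?thesis
    by simp
qed

lemma H1_coord_mult:
  assumes u: "H1 \<Omega> u Du"
  shows "H1 \<Omega> (\<lambda>x. x $ j * u x) (coord_mult_grad j u Du)"
proof (rule H1I)
  note u' = H1D[OF u]
  show "square_integrable M (\<lambda>x. x $ j * u x)"
    using square_integrable_coord_mult[OF u'(1)] .
  show "square_integrable M (\<lambda>x. coord_mult_grad j u Du x $ i)" for i
    unfolding coord_mult_grad_def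
    using square_integrable_add[OF square_integrable_cmult[OF u'(1)] square_integrable_coord_mult[OF u'(2)]]
    by simp
  fix i \<psi> assume \<psi>: "\<psi> \<in> test_fun \<Omega>"
  let ?e = "(if i = j then 1 else 0) :: real"
  have int_u: "integrable M (\<lambda>x. u x * \<psi> x)"
    using square_integrable_imp_integrable_mult[OF u'(1) test_fun_square_integrable[OF \<psi>]] .
  have int_xu: "integrable M (\<lambda>x. (x $ j * u x) * partial_deriv i \<psi> x)"
    using square_integrable_imp_integrable_mult[OF square_integrable_coord_mult[OF u'(1)]
        test_fun_square_integrable[OF test_fun_partial_deriv[OF \<psi>]]] .
  have int_xDu: "integrable M (\<lambda>x. (x $ j * Du x $ i) * \<psi> x)"
    using square_integrable_imp_integrable_mult[OF square_integrable_coord_mult[OF u'(2)]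
        test_fun_square_integrable[OF \<psi>]] .
  have "(\<lambda>x. u x * partial_deriv i (\<lambda>x. x $ j * \<psi> x) x)
      = (\<lambda>x. ?e * (u x * \<psi> x) + (x $ j * u x) * partial_deriv i \<psi> x)"
    by (rule ext, simp only: test_fun_partial_deriv_coord_mult[OF \<psi>]) (simp add: algebra_simps)
  then have "(\<integral>x. u x * partial_deriv i (\<lambda>x. x $ j * \<psi> x) x \<partial>M)
      = ?e * (\<integral>x. u x * \<psi> x \<partial>M) + (\<integral>x. (x $ j * u x) * partial_deriv i \<psi> x \<partial>M)"
    using int_u int_xu by simp
  moreover have "(\<lambda>x. coord_mult_grad j u Du x $ i * \<psi> x) = (\<lambda>x. ?e * (u x * \<psi> x) + (x $ j * Du x $ i) * \<psi> x)"
    by (auto simp: coord_mult_grad_def algebra_simps)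
  then have "(\<integral>x. coord_mult_grad j u Du x $ i * \<psi> x \<partial>M)
      = ?e * (\<integral>x. u x * \<psi> x \<partial>M) + (\<integral>x. (x $ j * Du x $ i) * \<psi> x \<partial>M)"
    using int_u int_xDu by simp
  moreover have "(\<integral>x. u x * partial_deriv i (\<lambda>x. x $ j * \<psi> x) x \<partial>M)
      = - (\<integral>x. (x $ j * Du x $ i) * \<psi> x \<partial>M)"
    using u'(3)[OF test_fun_coord_mult[OF \<psi>]] by (simp add: algebra_simps)
  ultimately show "(\<integral>x. x $ j * u x * partial_deriv i \<psi> x \<partial>M) = - (\<integral>x. coord_mult_grad j u Du x $ i * \<psi> x \<partial>M)"
    by linarith
qed

lemma L2_tendsto_zero_coord_comb:
  assumes a: "\<And>n. square_integrable M (a n)" and b: "\<And>n. square_integrable M (b n)"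
    and lim_a: "(\<lambda>n. \<integral>x. (a n x)\<^sup>2 \<partial>M) \<longlonglongrightarrow> 0" and lim_b: "(\<lambda>n. \<integral>x. (b n x)\<^sup>2 \<partial>M) \<longlonglongrightarrow> 0"
    and c: "\<bar>c\<bar> \<le> 1"
  shows "(\<lambda>n. \<integral>x. (c * a n x + x $ j * b n x)\<^sup>2 \<partial>M) \<longlonglongrightarrow> 0"
proof -
  obtain C where "\<forall>x\<in>\<Omega>. norm x \<le> C"
    using bounded_domain bounded_iff by blast
  then have C: "(x $ j)\<^sup>2 \<le> C\<^sup>2" if "x \<in> \<Omega>" for x
    using component_le_norm_cart[of x j] that abs_le_square_iff[of "x $ j" C] by fastforce
  show ?thesis
  proof (rule integral_tendsto_zero_bound[where G = "\<lambda>n x. 2 * (a n x)\<^sup>2 + 2 * C\<^sup>2 * (b n x)\<^sup>2"])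
    show "integrable M (\<lambda>x. (c * a n x + x $ j * b n x)\<^sup>2)" for n
      using square_integrable_add[OF square_integrable_cmult[OF a] square_integrable_coord_mult[OF b]]
      by (simp add: square_integrable_def)
    show "integrable M (\<lambda>x. 2 * (a n x)\<^sup>2 + 2 * C\<^sup>2 * (b n x)\<^sup>2)" for n
      using a b by (simp add: square_integrable_def)
    show "(c * a n x + x $ j * b n x)\<^sup>2 \<le> 2 * (a n x)\<^sup>2 + 2 * C\<^sup>2 * (b n x)\<^sup>2"
      if "x \<in> space M" for n x
    proof -
      have "(c * a n x + x $ j * b n x)\<^sup>2 \<le> 2 * (c * a n x)\<^sup>2 + 2 * (x $ j * b n x)\<^sup>2"
        using sum_squares_bound[of "c * a n x" "x $ j * b n x"] by (simp add: power2_sum)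
      moreover have "(c * a n x)\<^sup>2 \<le> (a n x)\<^sup>2"
        using c abs_le_square_iff[of c 1] by (simp add: power_mult_distrib mult_left_le_one_le)
      moreover have "(x $ j * b n x)\<^sup>2 \<le> C\<^sup>2 * (b n x)\<^sup>2"
        using C that by (simp add: power_mult_distrib mult_right_mono)
      ultimately show ?thesis
        by linarith
    qed
    have "(\<lambda>n. 2 * (\<integral>x. (a n x)\<^sup>2 \<partial>M) + 2 * C\<^sup>2 * (\<integral>x. (b n x)\<^sup>2 \<partial>M)) \<longlonglongrightarrow> 2 * 0 + 2 * C\<^sup>2 * 0"
      by (intro tendsto_intros lim_a lim_b)
    then show "(\<lambda>n. \<integral>x. 2 * (a n x)\<^sup>2 + 2 * C\<^sup>2 * (b n x)\<^sup>2 \<partial>M) \<longlonglongrightarrow> 0"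
      using a b by (simp add: square_integrable_def)
  qed simp
qed

lemma H10_coord_mult:
  assumes u: "H10 \<Omega> u Du"
  shows "H10 \<Omega> (\<lambda>x. x $ j * u x) (coord_mult_grad j u Du)"
proof -
  obtain \<psi> where \<psi>: "\<And>n. \<psi> n \<in> test_fun \<Omega>" and lim0: "(\<lambda>n. \<integral>x. (\<psi> n x - u x)\<^sup>2 \<partial>M) \<longlonglongrightarrow> 0"
    and lim1: "\<And>i. (\<lambda>n. \<integral>x. (partial_deriv i (\<psi> n) x - Du x $ i)\<^sup>2 \<partial>M) \<longlonglongrightarrow> 0"
    using H10E[OF u] by blast
  note u' = H1D[OF H10_imp_H1[OF u]]
  have diff0: "square_integrable M (\<lambda>x. \<psi> n x - u x)" for n
    using square_integrable_diff[OF test_fun_square_integrable[OF \<psi>] u'(1)] .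
  have diff1: "square_integrable M (\<lambda>x. partial_deriv i (\<psi> n) x - Du x $ i)" for i n
    using square_integrable_diff[OF test_fun_square_integrable[OF test_fun_partial_deriv[OF \<psi>]] u'(2)] .
  show ?thesis
  proof (rule H10I[OF H1_coord_mult[OF H10_imp_H1[OF u]]])
    show "(\<lambda>x. x $ j * \<psi> n x) \<in> test_fun \<Omega>" for n
      using test_fun_coord_mult[OF \<psi>] .
    show "(\<lambda>n. \<integral>x. (x $ j * \<psi> n x - x $ j * u x)\<^sup>2 \<partial>M) \<longlonglongrightarrow> 0"
      using L2_tendsto_zero_coord_comb[OF diff0 diff0 lim0 lim0, of 0 j]
      by (simp add: right_diff_distrib)
    fix i
    have "partial_deriv i (\<lambda>x. x $ j * \<psi> n x) x - coord_mult_grad j u Du x $ i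
       = (if i = j then 1 else 0) * (\<psi> n x - u x) + x $ j * (partial_deriv i (\<psi> n) x - Du x $ i)" for n x
      by (simp add: test_fun_partial_deriv_coord_mult[OF \<psi>] coord_mult_grad_def algebra_simps)
    then show "(\<lambda>n. \<integral>x. (partial_deriv i (\<lambda>x. x $ j * \<psi> n x) x - coord_mult_grad j u Du x $ i)\<^sup>2 \<partial>M)
        \<longlonglongrightarrow> 0"
      using L2_tendsto_zero_coord_comb[OF diff0 diff1 lim0 lim1, of "if i = j then 1 else 0" j]
      by simp
  qed
qed

section \<open>A Rellich-type identity\<close>

text \<open>Both sides equal \<open>\<integral> \<phi> \<partial>\<^sub>j\<partial>\<^sub>i\<psi>\<close>, by Schwarz's theorem for the test function \<open>\<psi>\<close>.\<close>
lemma weak_hessian_symmetric_test: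
  assumes \<phi>: "H1 \<Omega> \<phi> G" and G: "\<And>j. H1 \<Omega> (\<lambda>x. G x $ j) (DG j)" and \<psi>: "\<psi> \<in> test_fun \<Omega>"
  shows "(\<integral>x. \<psi> x * DG j x $ i \<partial>M) = (\<integral>x. \<psi> x * DG i x $ j \<partial>M)"
proof -
  have "(\<integral>x. DG j x $ i * \<psi> x \<partial>M) = (\<integral>x. \<phi> x * partial_deriv j (partial_deriv i \<psi>) x \<partial>M)"
    using H1D(3)[OF G[of j] \<psi>, of i] H1D(3)[OF \<phi> test_fun_partial_deriv[OF \<psi>], of j] by simp
  moreover have "(\<integral>x. DG i x $ j * \<psi> x \<partial>M) = (\<integral>x. \<phi> x * partial_deriv i (partial_deriv j \<psi>) x \<partial>M)"
    using H1D(3)[OF G[of i] \<psi>, of j] H1D(3)[OF \<phi> test_fun_partial_deriv[OF \<psi>], of i] by simp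
  ultimately show ?thesis
    using test_fun_partial_deriv_commute[OF \<psi>, of j i] by (simp add: mult.commute)
qed

lemma weak_hessian_symmetric:
  assumes \<phi>: "H1 \<Omega> \<phi> G" and G: "\<And>j. H1 \<Omega> (\<lambda>x. G x $ j) (DG j)" and f: "H10 \<Omega> f Df"
  shows "(\<integral>x. f x * DG j x $ i \<partial>M) = (\<integral>x. f x * DG i x $ j \<partial>M)"
proof -
  obtain \<psi> where \<psi>: "\<And>n. \<psi> n \<in> test_fun \<Omega>" and lim: "(\<lambda>n. \<integral>x. (\<psi> n x - f x)\<^sup>2 \<partial>M) \<longlonglongrightarrow> 0"
    using H10E[OF f] by blast
  note f' = H1D[OF H10_imp_H1[OF f]]
  have l1: "(\<lambda>n. \<integral>x. \<psi> n x * DG j x $ i \<partial>M) \<longlonglongrightarrow> (\<integral>x. f x * DG j x $ i \<partial>M)"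
    by (rule L2_tendsto_integral_mult[OF f'(1) H1D(2)[OF G] test_fun_square_integrable[OF \<psi>] lim])
  have l2: "(\<lambda>n. \<integral>x. \<psi> n x * DG i x $ j \<partial>M) \<longlonglongrightarrow> (\<integral>x. f x * DG i x $ j \<partial>M)"
    by (rule L2_tendsto_integral_mult[OF f'(1) H1D(2)[OF G] test_fun_square_integrable[OF \<psi>] lim])
  have eq: "(\<lambda>n. \<integral>x. \<psi> n x * DG j x $ i \<partial>M) = (\<lambda>n. \<integral>x. \<psi> n x * DG i x $ j \<partial>M)"
    by (rule ext, rule weak_hessian_symmetric_test[OF \<phi> G \<psi>])
  show ?thesis
    using LIMSEQ_unique[OF l1[unfolded eq] l2] .
qed

text \<open>Test the weak derivative of \<open>u\<close> against \<open>x\<^sub>j u\<close>: \<open>\<integral> x\<^sub>j u \<partial>\<^sub>ju = -\<integral> u (u + x\<^sub>j \<partial>\<^sub>ju)\<close>.\<close>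
lemma integral_coord_mult_partial:
  assumes u: "H10 \<Omega> u Du"
  shows "(\<integral>x. x $ j * u x * Du x $ j \<partial>M) = - (1/2) * (\<integral>x. (u x)\<^sup>2 \<partial>M)"
proof -
  note u' = H1D[OF H10_imp_H1[OF u]]
  have "(\<integral>x. u x * coord_mult_grad j u Du x $ j \<partial>M) = - (\<integral>x. Du x $ j * (x $ j * u x) \<partial>M)"
    using H10_integration_by_parts[OF u H1_coord_mult[OF H10_imp_H1[OF u]]] .
  moreover have "(\<lambda>x. u x * coord_mult_grad j u Du x $ j) = (\<lambda>x. (u x)\<^sup>2 + x $ j * u x * Du x $ j)"
    by (simp add: coord_mult_grad_def power2_eq_square algebra_simps)
  moreover have "integrable M (\<lambda>x. x $ j * u x * Du x $ j)"
    using square_integrable_imp_integrable_mult[OF square_integrable_coord_mult[OF u'(1)] u'(2)] .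
  ultimately have "(\<integral>x. (u x)\<^sup>2 \<partial>M) + (\<integral>x. x $ j * u x * Du x $ j \<partial>M)
      = - (\<integral>x. x $ j * u x * Du x $ j \<partial>M)"
    using u'(1) by (simp add: square_integrable_def algebra_simps)
  then show ?thesis
    by simp
qed

text \<open>The \<open>i\<close>-th term of \<open>\<integral> G \<cdot> \<nabla>(x\<^sub>j G\<^sub>j)\<close>; symmetry \<open>\<partial>\<^sub>iG\<^sub>j = \<partial>\<^sub>jG\<^sub>i\<close> reduces it to
  \<open>integral_coord_mult_partial\<close> for \<open>G\<^sub>i\<close>.\<close>
lemma integral_component_coord_mult_grad:
  assumes \<phi>: "H1 \<Omega> \<phi> G" and G: "\<And>j. H10 \<Omega> (\<lambda>x. G x $ j) (DG j)"
  shows "(\<integral>x. G x $ i * coord_mult_grad j (\<lambda>x. G x $ j) (DG j) x $ i \<partial>M)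
    = (if i = j then (\<integral>x. (G x $ j)\<^sup>2 \<partial>M) else 0) - (1/2) * (\<integral>x. (G x $ i)\<^sup>2 \<partial>M)"
proof -
  note G' = H1D[OF H10_imp_H1[OF G]]
  let ?e = "(if i = j then 1 else 0) :: real"
  have "(\<lambda>x. G x $ i * coord_mult_grad j (\<lambda>x. G x $ j) (DG j) x $ i)
      = (\<lambda>x. ?e * (G x $ i * G x $ j) + (x $ j * G x $ i) * DG j x $ i)"
    by (auto simp: coord_mult_grad_def algebra_simps)
  moreover have "integrable M (\<lambda>x. G x $ i * G x $ j)"
    using square_integrable_imp_integrable_mult[OF G'(1) G'(1)] .
  moreover have "integrable M (\<lambda>x. (x $ j * G x $ i) * DG j x $ i)"
    using square_integrable_imp_integrable_mult[OF square_integrable_coord_mult[OF G'(1)] G'(2)] .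
  ultimately have "(\<integral>x. G x $ i * coord_mult_grad j (\<lambda>x. G x $ j) (DG j) x $ i \<partial>M)
      = ?e * (\<integral>x. G x $ i * G x $ j \<partial>M) + (\<integral>x. (x $ j * G x $ i) * DG j x $ i \<partial>M)"
    by simp
  also have "(\<integral>x. (x $ j * G x $ i) * DG j x $ i \<partial>M) = (\<integral>x. (x $ j * G x $ i) * DG i x $ j \<partial>M)"
    using weak_hessian_symmetric[OF \<phi> H10_imp_H1[OF G] H10_coord_mult[OF G[of i]]] .
  also have "\<dots> = - (1/2) * (\<integral>x. (G x $ i)\<^sup>2 \<partial>M)"
    using integral_coord_mult_partial[OF G[of i]] .
  finally show ?thesis
    by (simp add: power2_eq_square)
qed

lemma integral_inner_eq_sum:
  assumes "\<And>i. square_integrable M (\<lambda>x. F x $ i)" "\<And>i. square_integrable M (\<lambda>x. H x $ i)"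
  shows "(\<integral>x. F x \<bullet> H x \<partial>M) = (\<Sum>i\<in>UNIV. \<integral>x. F x $ i * H x $ i \<partial>M)"
  unfolding inner_vec_def inner_real_def using assms
  by (intro Bochner_Integration.integral_sum) (auto intro: square_integrable_imp_integrable_mult)

lemma gradient_eigenfunction_vanishes:
  assumes \<phi>: "H10 \<Omega> \<phi> G"
    and eigen: "\<And>\<psi> D\<psi>. H10 \<Omega> \<psi> D\<psi> \<Longrightarrow> (\<integral>x. G x \<bullet> D\<psi> x \<partial>M) = lam * (\<integral>x. \<phi> x * \<psi> x \<partial>M)"
    and G: "\<And>j. H10 \<Omega> (\<lambda>x. G x $ j) (DG j)"
  shows "AE x in M. G x = 0"
proof -
  define P where "P = (\<integral>x. (\<phi> x)\<^sup>2 \<partial>M)"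
  define Q where "Q = (\<Sum>j\<in>UNIV. \<integral>x. (G x $ j)\<^sup>2 \<partial>M)"
  note G' = H1D[OF H10_imp_H1[OF G]]
  have energy: "Q = lam * P"
    using eigen[OF \<phi>] integral_inner_eq_sum[OF G'(1) G'(1)]
    by (simp add: P_def Q_def power2_eq_square)
  have rellich: "(\<integral>x. (G x $ j)\<^sup>2 \<partial>M) - Q / 2 = - lam * P / 2" for j
  proof -
    note xG = H10_coord_mult[OF G[of j]]
    have "(\<integral>x. G x \<bullet> coord_mult_grad j (\<lambda>x. G x $ j) (DG j) x \<partial>M)
        = (\<Sum>i\<in>UNIV. (if i = j then (\<integral>x. (G x $ j)\<^sup>2 \<partial>M) else 0) - (1/2) * (\<integral>x. (G x $ i)\<^sup>2 \<partial>M))"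
      using integral_inner_eq_sum[OF G'(1) H1D(2)[OF H10_imp_H1[OF xG]]]
        integral_component_coord_mult_grad[OF H10_imp_H1[OF \<phi>] G] by simp
    also have "\<dots> = (\<integral>x. (G x $ j)\<^sup>2 \<partial>M) - Q / 2"
      by (simp add: sum_subtractf Q_def sum_divide_distrib[symmetric])
    finally have "(\<integral>x. G x \<bullet> coord_mult_grad j (\<lambda>x. G x $ j) (DG j) x \<partial>M) = (\<integral>x. (G x $ j)\<^sup>2 \<partial>M) - Q / 2" .
    moreover have "(\<integral>x. \<phi> x * (x $ j * G x $ j) \<partial>M) = - P / 2"
      using integral_coord_mult_partial[OF \<phi>, of j] by (simp add: P_def algebra_simps)
    ultimately show ?thesis
      using eigen[OF xG] by simp
  qed
  have "(\<Sum>j\<in>UNIV. (\<integral>x. (G x $ j)\<^sup>2 \<partial>M) - Q / 2) = (\<Sum>j\<in>(UNIV::3 set). - lam * P / 2)"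
    using rellich by simp
  then have "Q - 3 * (Q / 2) = 3 * (- lam * P / 2)"
    by (simp add: sum_subtractf Q_def)
  then have "Q = 0"
    using energy by auto
  then have "(\<integral>x. (G x $ j)\<^sup>2 \<partial>M) = 0" for j
    using sum_nonneg_eq_0_iff[of UNIV "\<lambda>j. \<integral>x. (G x $ j)\<^sup>2 \<partial>M"] by (simp add: Q_def)
  then have "AE x in M. (G x $ j)\<^sup>2 = 0" for j
    using integral_nonneg_eq_0_iff_AE[of M "\<lambda>x. (G x $ j)\<^sup>2"] G'(1)[of j]
    by (simp add: square_integrable_def)
  then have "AE x in M. \<forall>j\<in>UNIV. G x $ j = 0"
    by (subst AE_finite_all) auto
  then show ?thesis
    by eventually_elim (simp add: vec_eq_iff)
qed

end

theorem mainTheorem8: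
  fixes \<Omega> :: "(real^3) set" and lam :: real
    and \<phi> :: "real^3 \<Rightarrow> real" and G :: "real^3 \<Rightarrow> real^3"
    and DG :: "3 \<Rightarrow> real^3 \<Rightarrow> real^3"
  assumes "lipschitz_domain \<Omega>" and "bounded \<Omega>" and "connected \<Omega>"
    and "dirichlet_eigen_kernel \<Omega> lam \<phi> G"
    and "\<forall>j. H10 \<Omega> (\<lambda>x. G x $ j) (DG j)"
  shows "AE x in lebesgue. x \<in> \<Omega> \<longrightarrow> G x = 0"
proof -
  interpret bounded_open_domain \<Omega>
    using assms(1,2) by unfold_locales (simp add: lipschitz_domain_def)
  have "AE x in M. G x = 0"
  proof (rule gradient_eigenfunction_vanishes)
    show "H10 \<Omega> \<phi> G"
      using assms(4) by (simp add: dirichlet_eigen_kernel_def)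
    show "(\<integral>x. G x \<bullet> D\<psi> x \<partial>M) = lam * (\<integral>x. \<phi> x * \<psi> x \<partial>M)" if "H10 \<Omega> \<psi> D\<psi>" for \<psi> D\<psi>
      using assms(4) that by (simp add: dirichlet_eigen_kernel_def set_lebesgue_integral_domain)
    show "H10 \<Omega> (\<lambda>x. G x $ j) (DG j)" for j
      using assms(5) by simp
  qed
  then show ?thesis
    by (simp add: AE_domain_iff)
qed

end
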